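(* Let $\phi:\mathcal A\to\mathcal A$ be a peak selection for $(C_u)_{u\in\mathcal A}$ satisfying (AC1) and (AC2) with constants $\gamma,\delta$, and let $\alpha:=\tfrac12(1-\delta)\cos\gamma$ be the constant used in the definition of the stepsize sets $S(\cdot)$. If $u_0\in\operatorname{Ran}\phi$, $\nabla\mathcal E(u_0)\ne0$ and $\phi$ is continuous at $u_0$, then there exist an open neighborhood $V$ of $u_0$ and $s^*>0$ such that $S(u)\subset[s^*,+\infty)$ for every $u\in V\cap\operatorname{Ran}\phi$.
   Context: $\mathcal H$ is a real Hilbert space with inner product $\langle\cdot,\cdot\rangle$ and norm $\|\cdot\|$; $\mathcal E\in C^1(\mathcal H;\mathbb R)$; $\mathcal A\subset\mathcal H$ is open; $B(u,r)$ is the open ball. For a closed cone $C$, $\operatorname{span}C$ is the smallest closed linear subspace containing $C$, $\operatorname{int}C$ is the interior of $C$ relative to $\operatorname{span}C$; $d\perp C$ means $d\perp\operatorname{span}C$. A peak selection for $(C_u)_{u\in\mathcal A}$ is a map $\phi:\mathcal A\to\mathcal A$ such that for all $u\in\mathcal A$: (1) $C_u$ is a closed cone with vertex $0$; (2) $\phi(u)\in\operatorname{int}C_u$; (3) $\phi(v)=\phi(u)$ for every $v\in\operatorname{int}C_u$; (4) $\phi(u)$ is a global maximum point of $\mathcal E$ on $C_u$. $A_\gamma(d):=\{d':\|d'\|=\|d\|,\ \arccos(\langle d,d'\rangle/(\|d\|\|d'\|))\le\gamma\}$ for $d\ne0$, $A_\gamma(0)=\{0\}$; $I\,S:=\{ts:t\in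 I,s\in S\}$. (AC1): for all $u\in\mathcal A$, $u\in C_u$. (AC2): there exist $\gamma\in(0,\pi/2)$, $\delta\in(0,1)$ such that for every $u_0\in\operatorname{Ran}\phi$ there is $r>0$ such that for all $\tilde u_0\in\operatorname{Ran}\phi\cap B(u_0,r)$ and all $d\in B(0,r)$ with $d\perp C_{\tilde u_0}$ and $\tilde u_0+d\in\mathcal A$: $C_{\tilde u_0+d}\cap B(u_0,r)\subset C_{\tilde u_0}+[1-\delta,1+\delta]A_\gamma(d)$. Stepsizes: for $u_0\in\operatorname{Ran}\phi$ with $\nabla\mathcal E(u_0)\ne0$, $S^*(u_0):=\{s>0: u_s:=u_0-s\nabla\mathcal E(u_0)/\|\nabla\mathcal E(u_0)\|\in\mathcal A \text{ and } \mathcal E(\phi(u_s))-\mathcal E(u_0)<-\alpha s\|\nabla\mathcal E(u_0)\|\}$ and $S(u_0):=S^*(u_0)\cap[\tfrac12\sup S^*(u_0),+\infty)$. *)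

theory Defs
  imports "HOL-Analysis.Analysis"
begin

definition cspan :: "'a::real_normed_vector set \<Rightarrow> 'a set" where
  "cspan C = closure (span C)"

definition int_rel :: "'a::real_normed_vector set \<Rightarrow> 'a set" where
  "int_rel C = {x \<in> C. \<exists>e>0. ball x e \<inter> cspan C \<subseteq> C}"

definition orth_cone :: "'a::real_inner \<Rightarrow> 'a set \<Rightarrow> bool" where
  "orth_cone d C \<longleftrightarrow> (\<forall>v\<in>cspan C. inner d v = 0)"

definition A_gamma :: "real \<Rightarrow> 'a::real_inner \<Rightarrow> 'a set" where
  "A_gamma \<gamma> d = (if d = 0 then {0} else
     {d'. norm d' = norm d \<and> arccos (inner d d' / (norm d * norm d')) \<le> \<gamma>})"

definition peak_selection ::
  "('a::real_inner \<Rightarrow> real) \<Rightarrow> 'a set \<Rightarrow> ('a \<Rightarrow> 'a set) \<Rightarrow> ('a \<Rightarrow> 'a) \<Rightarrow> bool" where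
  "peak_selection E A C \<phi> \<longleftrightarrow>
     (\<forall>u\<in>A. \<phi> u \<in> A \<and> closed (C u) \<and> cone (C u) \<and> \<phi> u \<in> int_rel (C u)
        \<and> (\<forall>v\<in>int_rel (C u) \<inter> A. \<phi> v = \<phi> u)
        \<and> (\<forall>w\<in>C u. E w \<le> E (\<phi> u)))"

definition AC1 :: "'a set \<Rightarrow> ('a \<Rightarrow> 'a set) \<Rightarrow> bool" where
  "AC1 A C \<longleftrightarrow> (\<forall>u\<in>A. u \<in> C u)"

definition AC2 ::
  "'a::real_inner set \<Rightarrow> ('a \<Rightarrow> 'a set) \<Rightarrow> ('a \<Rightarrow> 'a) \<Rightarrow> real \<Rightarrow> real \<Rightarrow> bool" where
  "AC2 A C \<phi> \<gamma> \<delta> \<longleftrightarrow> 0 < \<gamma> \<and> \<gamma> < pi / 2 \<and> 0 < \<delta> \<and> \<delta> < 1 \<and>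
     (\<forall>u0\<in>\<phi> ` A. \<exists>r>0. \<forall>u0'\<in>\<phi> ` A \<inter> ball u0 r. \<forall>d\<in>ball 0 r.
        orth_cone d (C u0') \<and> u0' + d \<in> A \<longrightarrow>
        C (u0' + d) \<inter> ball u0 r \<subseteq>
          {x + t *\<^sub>R y | x t y. x \<in> C u0' \<and> t \<in> {1 - \<delta> .. 1 + \<delta>} \<and> y \<in> A_gamma \<gamma> d})"

definition Sstar ::
  "('a::real_inner \<Rightarrow> real) \<Rightarrow> ('a \<Rightarrow> 'a) \<Rightarrow> 'a set \<Rightarrow> ('a \<Rightarrow> 'a) \<Rightarrow> real \<Rightarrow> 'a \<Rightarrow> real set" where
  "Sstar E gradE A \<phi> \<alpha> u0 =
     {s. s > 0 \<and> (let us = u0 - (s / norm (gradE u0)) *\<^sub>R gradE u0 in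
          us \<in> A \<and> E (\<phi> us) - E u0 < - \<alpha> * s * norm (gradE u0))}"

text \<open>S(u0) = S*(u0) \<inter> [sup S*(u0)/2, +\<infinity>), the supremum taken in the extended reals
  (so S(u0) is empty if S*(u0) is unbounded or empty).\<close>
definition Sstep ::
  "('a::real_inner \<Rightarrow> real) \<Rightarrow> ('a \<Rightarrow> 'a) \<Rightarrow> 'a set \<Rightarrow> ('a \<Rightarrow> 'a) \<Rightarrow> real \<Rightarrow> 'a \<Rightarrow> real set" where
  "Sstep E gradE A \<phi> \<alpha> u0 =
     {s \<in> Sstar E gradE A \<phi> \<alpha> u0. Sup (ereal ` Sstar E gradE A \<phi> \<alpha> u0) / 2 \<le> ereal s}"

end

theory Submission
  imports Defs
begin

text \<open>Near \<open>u0\<close> the gradient is almost constant and \<open>\<phi>\<close> moves points only slightly, so for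
  every \<open>u\<close> of the range close to \<open>u0\<close> one fixed small stepsize \<open>s\<close> is admissible. Since \<open>u\<close>
  maximises \<open>E\<close> on \<open>C u\<close> from the relative interior, the step \<open>d = -s \<nabla>E(u)/\<parallel>\<nabla>E(u)\<parallel>\<close> is
  orthogonal to \<open>C u\<close>, and (AC2) writes the new peak \<open>\<phi>(u + d)\<close> as \<open>x + t y\<close> with \<open>x \<in> C u\<close>
  (so \<open>E x \<le> E u\<close>), \<open>t \<ge> 1 - \<delta>\<close> and \<open>y\<close> within angle \<open>\<gamma>\<close> of \<open>d\<close>. Linearising \<open>E\<close> along \<open>t y\<close>
  gives the Armijo-type decrease \<open>E(\<phi>(u + d)) - E u < -\<alpha> s \<parallel>\<nabla>E(u)\<parallel>\<close>, i.e. \<open>s \<in> S*(u)\<close>,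
  and then every element of \<open>S(u)\<close> is at least \<open>s/2\<close>.\<close>

lemma onorm_inner_le:
  fixes v :: "'a::real_inner"
  shows "onorm (\<lambda>h. inner v h) \<le> norm v"
  by (rule onorm_bound) (auto simp: Cauchy_Schwarz_ineq2)

lemma gradient_linearization_error:
  fixes E :: "'a::real_inner \<Rightarrow> real"
  assumes grad: "\<And>z. z \<in> S \<Longrightarrow> (E has_derivative (\<lambda>h. inner (gradE z) h)) (at z)"
    and "convex S"
    and near: "\<And>z. z \<in> S \<Longrightarrow> norm (gradE z - gradE c) \<le> \<epsilon>"
    and "c \<in> S" "x \<in> S" "w \<in> S"
  shows "\<bar>E w - E x - inner (gradE c) (w - x)\<bar> \<le> \<epsilon> * norm (w - x)"
proof -
  have "x + t *\<^sub>R (w - x) \<in> S" if "t \<in> {0..1}" for t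
    using convexD_alt[OF \<open>convex S\<close> \<open>x \<in> S\<close> \<open>w \<in> S\<close>, of t] that
    by (simp add: algebra_simps)
  moreover have "onorm ((\<lambda>h. inner (gradE z) h) - (\<lambda>h. inner (gradE c) h)) \<le> \<epsilon>" if "z \<in> S" for z
    using onorm_inner_le[of "gradE z - gradE c"] near[OF that]
    by (simp add: fun_diff_def inner_diff_left)
  ultimately show ?thesis
    using differentiable_bound_linearization[of x w S E "\<lambda>z h. inner (gradE z) h" c \<epsilon>]
      grad \<open>c \<in> S\<close> by (auto simp: has_derivative_at_withinI mult.commute)
qed

lemma orth_cone_gradient_at_max:
  fixes E :: "'a::real_inner \<Rightarrow> real"
  assumes grad: "(E has_derivative (\<lambda>h. inner g h)) (at u)"
    and "u \<in> int_rel C" and max: "\<And>w. w \<in> C \<Longrightarrow> E w \<le> E u"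
  shows "orth_cone (c *\<^sub>R g) C"
proof -
  from \<open>u \<in> int_rel C\<close> obtain e where "u \<in> C" "e > 0" and ball_C: "ball u e \<inter> cspan C \<subseteq> C"
    unfolding int_rel_def by auto
  have "inner g v = 0" if "v \<in> span C" for v
  proof (cases "v = 0")
    case False
    have "((\<lambda>t. u + t *\<^sub>R v) has_derivative (\<lambda>t. t *\<^sub>R v)) (at 0)"
      by (auto intro!: derivative_eq_intros)
    from has_derivative_compose[OF this, of E "\<lambda>h. inner g h"] grad
    have "((\<lambda>t. E (u + t *\<^sub>R v)) has_derivative (\<lambda>t. inner g (t *\<^sub>R v))) (at 0)"
      by (simp add: o_def)
    then have "((\<lambda>t. E (u + t *\<^sub>R v)) has_real_derivative inner g v) (at 0)"
      by (simp add: has_field_derivative_def mult.commute[of _ "inner g v"])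
    moreover have "E (u + t *\<^sub>R v) \<le> E (u + 0 *\<^sub>R v)" if "\<bar>0 - t\<bar> < e / norm v" for t
    proof -
      have "u + t *\<^sub>R v \<in> ball u e"
        using that \<open>v \<noteq> 0\<close> by (simp add: dist_norm field_simps)
      moreover have "u + t *\<^sub>R v \<in> cspan C"
        unfolding cspan_def
        by (meson closure_subset span_add span_base span_scale subsetD \<open>u \<in> C\<close> \<open>v \<in> span C\<close>)
      ultimately show ?thesis using ball_C max by auto
    qed
    ultimately show ?thesis
      using DERIV_local_max[of _ _ 0 "e / norm v"] \<open>e > 0\<close> \<open>v \<noteq> 0\<close> by auto
  qed simp
  then have "cspan C \<subseteq> {v. inner g v = 0}"
    unfolding cspan_def by (intro closure_minimal) (auto intro: closed_hyperplane)
  then show ?thesis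
    unfolding orth_cone_def by auto
qed

lemma A_gamma_inner_ge:
  fixes d :: "'a::real_inner"
  assumes "d \<noteq> 0" "y \<in> A_gamma \<gamma> d" "0 \<le> \<gamma>" "\<gamma> \<le> pi"
  shows "norm y = norm d" and "norm d * norm y * cos \<gamma> \<le> inner d y"
proof -
  show ny: "norm y = norm d"
    using assms by (simp add: A_gamma_def)
  define c where "c = inner d y / (norm d * norm y)"
  have pos: "norm d * norm y > 0"
    using assms ny by simp
  have "\<bar>c\<bar> \<le> 1"
    unfolding c_def using Cauchy_Schwarz_ineq2[of d y] pos by (simp add: abs_div)
  then have "-1 \<le> c" "c \<le> 1" by auto
  moreover have "arccos c \<le> \<gamma>"
    using assms unfolding A_gamma_def c_def by auto
  ultimately have "cos \<gamma> \<le> cos (arccos c)"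
    using assms arccos_lbound arccos_ubound by (subst cos_mono_le_eq) auto
  then have "cos \<gamma> \<le> c"
    using \<open>\<bar>c\<bar> \<le> 1\<close> by (simp add: cos_arccos_abs)
  then show "norm d * norm y * cos \<gamma> \<le> inner d y"
    using pos by (simp add: c_def le_divide_eq mult.commute)
qed

lemma A_gamma_descent_direction:
  fixes g y :: "'a::real_inner"
  assumes "g \<noteq> 0" "0 < s" "y \<in> A_gamma \<gamma> ((- (s / norm g)) *\<^sub>R g)" "0 \<le> \<gamma>" "\<gamma> \<le> pi"
  shows "norm y = s" and "inner g y \<le> - norm g * s * cos \<gamma>"
proof -
  have "(- (s / norm g)) *\<^sub>R g \<noteq> 0" and norm_d: "norm ((- (s / norm g)) *\<^sub>R g) = s"
    using assms(1,2) by auto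
  from A_gamma_inner_ge[OF this(1) assms(3-5)] norm_d
  show "norm y = s" by simp
  from A_gamma_inner_ge[OF \<open>(- (s / norm g)) *\<^sub>R g \<noteq> 0\<close> assms(3-5)] norm_d \<open>norm y = s\<close>
  have "s * s * cos \<gamma> \<le> inner ((- (s / norm g)) *\<^sub>R g) y"
    by simp
  then have "s * (norm g * s * cos \<gamma>) \<le> s * (- inner g y)"
    using assms(1) by (simp add: field_simps)
  then have "norm g * s * cos \<gamma> \<le> - inner g y"
    using assms(2) by (rule mult_left_le_imp_le)
  then show "inner g y \<le> - norm g * s * cos \<gamma>"
    by simp
qed

lemma norm_lower_bound_of_near:
  fixes g g0 :: "'a::real_normed_vector"
  assumes "norm (g - g0) \<le> norm g0 * c / 8" "0 < c" "c \<le> 1" "g0 \<noteq> 0"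
  shows "4 * (norm g0 * c / 8) < norm g * c" and "g \<noteq> 0"
proof -
  have "norm g0 - norm g0 * c / 8 \<le> norm g"
    using assms(1) norm_triangle_ineq2[of g0 g] by (simp add: norm_minus_commute)
  then have "(norm g0 - norm g0 * c / 8) * c \<le> norm g * c"
    using assms(2) by (simp add: mult_right_mono)
  then have "norm g0 * c - norm g0 * c * c / 8 \<le> norm g * c"
    by (simp add: algebra_simps)
  moreover have "norm g0 * c * c \<le> norm g0 * c"
    using assms(2-4) by (simp add: mult_left_le)
  moreover have "0 < norm g0 * c"
    using assms(2,4) by simp
  ultimately show "4 * (norm g0 * c / 8) < norm g * c"
    by linarith
  with \<open>0 < norm g0 * c\<close> show "g \<noteq> 0"
    by (auto simp: mult.commute)
qed

lemma descent_estimate: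
  fixes E :: "'a::real_inner \<Rightarrow> real"
  assumes grad: "\<And>z. z \<in> ball c \<rho> \<Longrightarrow> (E has_derivative (\<lambda>h. inner (gradE z) h)) (at z)"
    and near: "\<And>z. z \<in> ball c \<rho> \<Longrightarrow> norm (gradE z - gradE c) \<le> \<epsilon>"
    and x: "x \<in> ball c \<rho>" "x + t *\<^sub>R y \<in> ball c \<rho>" "E x \<le> E u"
    and t: "1 - \<delta> \<le> t" "\<delta> < 1"
    and y: "norm y = s" "0 < s" "inner g y \<le> - norm g * s * cos \<gamma>"
    and g: "norm (g - gradE c) \<le> \<epsilon>" "4 * \<epsilon> < norm g * cos \<gamma>"
  shows "E (x + t *\<^sub>R y) - E u < - ((1 - \<delta>) * cos \<gamma> / 2) * s * norm g"
proof -
  have "t > 0" using t by linarith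
  have "c \<in> ball c \<rho>" using x(1) by (simp add: le_less_trans[OF zero_le_dist])
  then have \<epsilon>_nonneg: "0 \<le> \<epsilon>" using near[of c] by simp
  have "E (x + t *\<^sub>R y) - E x \<le> t * inner (gradE c) y + \<epsilon> * (t * s)"
    using gradient_linearization_error[OF grad convex_ball near \<open>c \<in> ball c \<rho>\<close> x(1,2)]
      \<open>t > 0\<close> y(1) by simp
  also have "\<dots> \<le> t * (- norm g * s * cos \<gamma> + \<epsilon> * s) + \<epsilon> * (t * s)"
  proof -
    have "inner (gradE c - g) y \<le> \<epsilon> * s"
      using Cauchy_Schwarz_ineq2[of "gradE c - g" y] g(1) y(1,2)
      by (smt (verit, best) mult_right_mono norm_ge_zero norm_minus_commute)
    then have "inner (gradE c) y \<le> - norm g * s * cos \<gamma> + \<epsilon> * s"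
      using y(3) by (simp add: inner_diff_left)
    then show ?thesis using \<open>t > 0\<close> by simp
  qed
  also have "\<dots> = (t * s) * (2 * \<epsilon> - norm g * cos \<gamma>)"
    by (simp add: algebra_simps)
  also have "\<dots> \<le> ((1 - \<delta>) * s) * (2 * \<epsilon> - norm g * cos \<gamma>)"
    using t y(2) g(2) \<epsilon>_nonneg by (intro mult_right_mono_neg mult_right_mono) auto
  also have "\<dots> < ((1 - \<delta>) * s) * (- (norm g * cos \<gamma>) / 2)"
    using t y(2) g(2) \<epsilon>_nonneg by (intro mult_strict_left_mono) auto
  finally show ?thesis
    using x(3) by (simp add: algebra_simps)
qed

lemma Sstep_subset_atLeast:
  assumes "s \<in> Sstar E gradE A \<phi> \<alpha> u"
  shows "Sstep E gradE A \<phi> \<alpha> u \<subseteq> {s / 2..}"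
proof
  fix s' assume s': "s' \<in> Sstep E gradE A \<phi> \<alpha> u"
  have "ereal s / 2 \<le> Sup (ereal ` Sstar E gradE A \<phi> \<alpha> u) / 2"
    using assms by (intro ereal_divide_right_mono Sup_upper imageI) simp_all
  also have "\<dots> \<le> ereal s'"
    using s' by (simp add: Sstep_def)
  finally show "s' \<in> {s / 2..}" by simp
qed

locale peak_descent =
  fixes E :: "'a::real_inner \<Rightarrow> real" and gradE :: "'a \<Rightarrow> 'a"
    and A :: "'a set" and C :: "'a \<Rightarrow> 'a set" and \<phi> :: "'a \<Rightarrow> 'a"
    and \<gamma> \<delta> :: real
  assumes grad: "\<And>u. (E has_derivative (\<lambda>h. inner (gradE u) h)) (at u)"
    and peak: "peak_selection E A C \<phi>"
    and ac2: "AC2 A C \<phi> \<gamma> \<delta>"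
begin

definition grad_step :: "'a \<Rightarrow> real \<Rightarrow> 'a" where
  "grad_step u s = u - (s / norm (gradE u)) *\<^sub>R gradE u"

definition peak_split :: "'a \<Rightarrow> real \<Rightarrow> bool" where
  "peak_split u s \<longleftrightarrow> (\<exists>x t y. \<phi> (grad_step u s) = x + t *\<^sub>R y \<and> E x \<le> E u \<and>
     1 - \<delta> \<le> t \<and> t \<le> 1 + \<delta> \<and> norm y = s \<and> inner (gradE u) y \<le> - norm (gradE u) * s * cos \<gamma>)"

lemma mem_Sstar_iff:
  "s \<in> Sstar E gradE A \<phi> \<alpha> u \<longleftrightarrow>
     0 < s \<and> grad_step u s \<in> A \<and> E (\<phi> (grad_step u s)) - E u < - \<alpha> * s * norm (gradE u)"
  by (auto simp: Sstar_def grad_step_def Let_def)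

lemma parameter_bounds: "0 < \<gamma>" "\<gamma> < pi / 2" "0 < \<delta>" "\<delta> < 1"
  using ac2 by (auto simp: AC2_def)

lemma peak_mem_cone: "v \<in> A \<Longrightarrow> \<phi> v \<in> C v"
  using peak by (auto simp: peak_selection_def int_rel_def)

text \<open>Points of the range are fixed by \<open>\<phi>\<close>, since \<open>\<phi>\<close> is constant on the relative interior
  of each cone.\<close>

lemma range_fixed:
  assumes "u \<in> \<phi> ` A"
  shows "u \<in> A" and "\<phi> u = u" and "u \<in> int_rel (C u)" and "\<And>w. w \<in> C u \<Longrightarrow> E w \<le> E u"
proof -
  from assms obtain w where "w \<in> A" "u = \<phi> w" by auto
  with peak show "u \<in> A" and "\<phi> u = u"
    unfolding peak_selection_def by auto
  with peak show "u \<in> int_rel (C u)" and "\<And>w. w \<in> C u \<Longrightarrow> E w \<le> E u"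
    unfolding peak_selection_def by metis+
qed

lemma gradient_step_decomposition:
  assumes "u0 \<in> \<phi> ` A"
  obtains r where "r > 0" and
    "\<And>u s. u \<in> \<phi> ` A \<inter> ball u0 r \<Longrightarrow> gradE u \<noteq> 0 \<Longrightarrow> 0 < s \<Longrightarrow> s < r \<Longrightarrow>
       grad_step u s \<in> A \<Longrightarrow> \<phi> (grad_step u s) \<in> ball u0 r \<Longrightarrow>
       peak_split u s"
proof -
  from ac2 assms obtain r where "r > 0" and ac2_r: "\<forall>u'\<in>\<phi> ` A \<inter> ball u0 r. \<forall>d\<in>ball 0 r.
        orth_cone d (C u') \<and> u' + d \<in> A \<longrightarrow>
        C (u' + d) \<inter> ball u0 r \<subseteq>
          {x + t *\<^sub>R y | x t y. x \<in> C u' \<and> t \<in> {1 - \<delta> .. 1 + \<delta>} \<and> y \<in> A_gamma \<gamma> d}"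
    unfolding AC2_def by blast
  moreover have "peak_split u s"
    if u: "u \<in> \<phi> ` A \<inter> ball u0 r" and "gradE u \<noteq> 0" and s: "0 < s" "s < r"
      and us: "grad_step u s \<in> A" and "\<phi> (grad_step u s) \<in> ball u0 r" for u s
  proof -
    define g where "g = gradE u"
    define d where "d = (- (s / norm g)) *\<^sub>R g"
    have step: "grad_step u s = u + d" by (simp add: grad_step_def d_def g_def)
    have "norm d = s" using \<open>gradE u \<noteq> 0\<close> s by (auto simp: d_def g_def)
    have "u \<in> \<phi> ` A" using u by blast
    note u_fixed = range_fixed[OF this]
    have "orth_cone d (C u)"
      unfolding d_def g_def by (rule orth_cone_gradient_at_max[OF grad u_fixed(3,4)])
    moreover have "d \<in> ball 0 r" "u + d \<in> A"
      using \<open>norm d = s\<close> s us step by auto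
    ultimately have "C (u + d) \<inter> ball u0 r \<subseteq>
          {x + t *\<^sub>R y | x t y. x \<in> C u \<and> t \<in> {1 - \<delta> .. 1 + \<delta>} \<and> y \<in> A_gamma \<gamma> d}"
      using ac2_r u by blast
    moreover have "\<phi> (u + d) \<in> C (u + d) \<inter> ball u0 r"
      using peak_mem_cone[OF \<open>u + d \<in> A\<close>] that(6) step by simp
    ultimately obtain x t y where xty: "\<phi> (u + d) = x + t *\<^sub>R y" "x \<in> C u"
        "1 - \<delta> \<le> t" "t \<le> 1 + \<delta>" "y \<in> A_gamma \<gamma> d"
      by (auto dest!: subsetD)
    moreover note A_gamma_descent_direction[OF \<open>gradE u \<noteq> 0\<close> s(1) xty(5)[unfolded d_def g_def]]
    ultimately show ?thesis
      unfolding peak_split_def step g_def using parameter_bounds xty u_fixed(4)[OF xty(2)] by auto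
  qed
  ultimately show ?thesis using that by blast
qed

lemma step_in_Sstar:
  assumes s: "0 < s" "4 * s \<le> \<rho>" and "grad_step u s \<in> A"
    and "peak_split u s"
    and near: "\<And>z. z \<in> ball c \<rho> \<Longrightarrow> norm (gradE z - gradE c) \<le> \<epsilon>"
    and "dist (\<phi> (grad_step u s)) c < \<rho> / 2"
    and "norm (gradE u - gradE c) \<le> \<epsilon>" "4 * \<epsilon> < norm (gradE u) * cos \<gamma>"
  shows "s \<in> Sstar E gradE A \<phi> ((1 - \<delta>) * cos \<gamma> / 2) u"
proof -
  from \<open>peak_split u s\<close> obtain x t y where xty: "\<phi> (grad_step u s) = x + t *\<^sub>R y" "E x \<le> E u" "1 - \<delta> \<le> t"
      "t \<le> 1 + \<delta>" "norm y = s" "inner (gradE u) y \<le> - norm (gradE u) * s * cos \<gamma>"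
    unfolding peak_split_def by blast
  have "0 < t" using xty(3) parameter_bounds by linarith
  have "t * s \<le> 2 * s"
    using xty(4) parameter_bounds s by (intro mult_right_mono) auto
  then have "norm (t *\<^sub>R y) \<le> 2 * s"
    using \<open>0 < t\<close> xty(5) by simp
  then have "x \<in> ball c \<rho>"
    using \<open>dist (\<phi> (grad_step u s)) c < \<rho> / 2\<close> s norm_triangle_ineq4[of "x + t *\<^sub>R y - c" "t *\<^sub>R y"]
    by (simp add: xty(1) dist_norm norm_minus_commute algebra_simps)
  moreover have "dist (\<phi> (grad_step u s)) c < \<rho>"
    using \<open>dist (\<phi> (grad_step u s)) c < \<rho> / 2\<close> zero_le_dist[of "\<phi> (grad_step u s)" c] by linarith
  then have "x + t *\<^sub>R y \<in> ball c \<rho>"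
    by (simp add: xty(1) dist_commute)
  ultimately have "E (x + t *\<^sub>R y) - E u < - ((1 - \<delta>) * cos \<gamma> / 2) * s * norm (gradE u)"
    using descent_estimate[OF grad near _ _ xty(2,3) parameter_bounds(4) xty(5) s(1) xty(6)] assms(7,8)
    by blast
  then show ?thesis
    using s \<open>grad_step u s \<in> A\<close> by (simp add: mem_Sstar_iff xty(1))
qed

lemma Sstar_mem_near:
  assumes decomp: "\<And>u s. u \<in> \<phi> ` A \<inter> ball u0 r \<Longrightarrow> gradE u \<noteq> 0 \<Longrightarrow>
       0 < s \<Longrightarrow> s < r \<Longrightarrow> grad_step u s \<in> A \<Longrightarrow> \<phi> (grad_step u s) \<in> ball u0 r \<Longrightarrow>
       peak_split u s"
    and near: "\<And>z. z \<in> ball u0 \<rho> \<Longrightarrow> norm (gradE z - gradE u0) \<le> norm (gradE u0) * cos \<gamma> / 8"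
    and \<phi>_near: "\<And>v. dist v u0 < m \<Longrightarrow> dist (\<phi> v) u0 < min r (\<rho> / 2)"
    and m: "0 < m" "m \<le> r" "m \<le> \<rho>" "ball u0 m \<subseteq> A"
    and "gradE u0 \<noteq> 0" and u: "u \<in> \<phi> ` A \<inter> ball u0 (m / 2)"
  shows "m / 8 \<in> Sstar E gradE A \<phi> ((1 - \<delta>) * cos \<gamma> / 2) u"
proof -
  have cos: "0 < cos \<gamma>" "cos \<gamma> \<le> 1"
    using parameter_bounds by (auto intro: cos_gt_zero_pi)
  have g_near: "norm (gradE u - gradE u0) \<le> norm (gradE u0) * cos \<gamma> / 8"
    using near u m by simp
  then have "4 * (norm (gradE u0) * cos \<gamma> / 8) < norm (gradE u) * cos \<gamma>" and "gradE u \<noteq> 0"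
    using norm_lower_bound_of_near cos \<open>gradE u0 \<noteq> 0\<close> by blast+
  then have "dist (grad_step u (m / 8)) u0 \<le> dist u u0 + m / 8"
    using norm_triangle_ineq4[of "u - u0" "(m / 8 / norm (gradE u)) *\<^sub>R gradE u"] m
    by (simp add: grad_step_def dist_norm algebra_simps)
  then have "dist (grad_step u (m / 8)) u0 < m"
    using u m by (simp add: dist_commute)
  then have "grad_step u (m / 8) \<in> A" and \<phi>_step: "dist (\<phi> (grad_step u (m / 8))) u0 < min r (\<rho> / 2)"
    using m \<phi>_near by (auto simp: dist_commute)
  moreover have "u \<in> \<phi> ` A \<inter> ball u0 r" "0 < m / 8" "m / 8 < r" "4 * (m / 8) \<le> \<rho>"
    using u m by auto
  moreover have "\<phi> (grad_step u (m / 8)) \<in> ball u0 r" "dist (\<phi> (grad_step u (m / 8))) u0 < \<rho> / 2"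
    using \<phi>_step by (auto simp: dist_commute)
  ultimately show ?thesis
    using step_in_Sstar[OF _ _ _ decomp near _ g_near] \<open>gradE u \<noteq> 0\<close>
      \<open>4 * (norm (gradE u0) * cos \<gamma> / 8) < norm (gradE u) * cos \<gamma>\<close> by blast
qed

lemma uniform_step_in_Sstar:
  assumes u0: "u0 \<in> \<phi> ` A" and "gradE u0 \<noteq> 0" and "isCont gradE u0" and "isCont \<phi> u0"
    and "open A"
  obtains \<rho> s where "\<rho> > 0" "s > 0"
    and "\<And>u. u \<in> \<phi> ` A \<inter> ball u0 \<rho> \<Longrightarrow> s \<in> Sstar E gradE A \<phi> ((1 - \<delta>) * cos \<gamma> / 2) u"
proof -
  obtain r where "r > 0" and decomp: "\<And>u s. u \<in> \<phi> ` A \<inter> ball u0 r \<Longrightarrow> gradE u \<noteq> 0 \<Longrightarrow>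
       0 < s \<Longrightarrow> s < r \<Longrightarrow> grad_step u s \<in> A \<Longrightarrow> \<phi> (grad_step u s) \<in> ball u0 r \<Longrightarrow>
       peak_split u s"
    using gradient_step_decomposition[OF u0] by metis
  have "0 < norm (gradE u0) * cos \<gamma> / 8"
    using \<open>gradE u0 \<noteq> 0\<close> parameter_bounds by (simp add: cos_gt_zero_pi)
  with \<open>isCont gradE u0\<close> obtain \<rho> where "\<rho> > 0"
    and near: "\<And>z. z \<in> ball u0 \<rho> \<Longrightarrow> norm (gradE z - gradE u0) \<le> norm (gradE u0) * cos \<gamma> / 8"
    unfolding continuous_at_eps_delta by (metis dist_commute dist_norm less_imp_le mem_ball)
  have "min r (\<rho> / 2) > 0" using \<open>r > 0\<close> \<open>\<rho> > 0\<close> by simp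
  with \<open>isCont \<phi> u0\<close> obtain \<eta> where "\<eta> > 0"
    and \<phi>_near: "\<And>v. dist v u0 < \<eta> \<Longrightarrow> dist (\<phi> v) u0 < min r (\<rho> / 2)"
    using range_fixed(2)[OF u0] unfolding continuous_at_eps_delta by metis
  obtain \<rho>A where "\<rho>A > 0" "ball u0 \<rho>A \<subseteq> A"
    using \<open>open A\<close> range_fixed(1)[OF u0] open_contains_ball by blast
  define m where "m = min (min r \<eta>) (min \<rho>A \<rho>)"
  have "0 < m" "m \<le> r" "m \<le> \<rho>" "ball u0 m \<subseteq> A" "\<And>v. dist v u0 < m \<Longrightarrow> dist (\<phi> v) u0 < min r (\<rho> / 2)"
    using \<open>r > 0\<close> \<open>\<eta> > 0\<close> \<open>\<rho>A > 0\<close> \<open>\<rho> > 0\<close> \<open>ball u0 \<rho>A \<subseteq> A\<close> \<phi>_near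
    by (auto simp: m_def)
  from Sstar_mem_near[OF decomp near this(5) this(1-4) \<open>gradE u0 \<noteq> 0\<close>] this(1)
  show thesis
    using that[of "m / 2" "m / 8"] by auto
qed

end

theorem mainTheorem2:
  fixes E :: "'a::{real_inner, complete_space} \<Rightarrow> real"
    and gradE :: "'a \<Rightarrow> 'a"
    and A :: "'a set" and C :: "'a \<Rightarrow> 'a set" and \<phi> :: "'a \<Rightarrow> 'a"
    and \<gamma> \<delta> :: real and u0 :: 'a
  assumes grad: "\<And>u. (E has_derivative (\<lambda>h. inner (gradE u) h)) (at u)"
    and grad_cont: "continuous_on UNIV gradE"
    and A_open: "open A"
    and peak: "peak_selection E A C \<phi>"
    and ac1: "AC1 A C"
    and ac2: "AC2 A C \<phi> \<gamma> \<delta>"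
    and u0: "u0 \<in> \<phi> ` A"
    and grad_nz: "gradE u0 \<noteq> 0"
    and cont: "continuous (at u0) \<phi>"
  shows "\<exists>V s_star. open V \<and> u0 \<in> V \<and> s_star > 0 \<and>
           (\<forall>u\<in>V \<inter> \<phi> ` A. gradE u \<noteq> 0 \<longrightarrow>
              Sstep E gradE A \<phi> ((1 - \<delta>) * cos \<gamma> / 2) u \<subseteq> {s_star..})"
proof -
  interpret peak_descent E gradE A C \<phi> \<gamma> \<delta>
    using grad peak ac2 by unfold_locales
  have "isCont gradE u0"
    using grad_cont by (simp add: continuous_on_eq_continuous_at)
  then obtain \<rho> s where "\<rho> > 0" "s > 0"
    and step: "\<And>u. u \<in> \<phi> ` A \<inter> ball u0 \<rho> \<Longrightarrow> s \<in> Sstar E gradE A \<phi> ((1 - \<delta>) * cos \<gamma> / 2) u"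
    using uniform_step_in_Sstar[OF u0 grad_nz _ cont A_open] by blast
  then have "Sstep E gradE A \<phi> ((1 - \<delta>) * cos \<gamma> / 2) u \<subseteq> {s / 2..}"
    if "u \<in> ball u0 \<rho> \<inter> \<phi> ` A" for u
    using Sstep_subset_atLeast that by blast
  then show ?thesis
    using \<open>\<rho> > 0\<close> \<open>s > 0\<close> by (intro exI[of _ "ball u0 \<rho>"] exI[of _ "s / 2"]) auto
qed

end
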